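(* Every ideal $J$ of $\widetilde{\mathbb{R}}_{sm}$ is convex: if $x\in J$ and $y\in\widetilde{\mathbb{R}}_{sm}$ with $0\le y\le x$, then $y\in J$.
   Context: Let $I=(0,1]$. $\widetilde{\mathbb{R}}_{sm}=\mathcal{E}_{M,sm}/\mathcal{N}_{sm}$ where $\mathcal{E}_{M,sm}$ is the set of smooth nets $(r_\varepsilon)_{\varepsilon\in I}\in\mathbb{R}^I$ with $|r_\varepsilon|=O(\varepsilon^{-N})$ for some $N$, and $\mathcal{N}_{sm}$ those with $|r_\varepsilon|=O(\varepsilon^m)$ for all $m$. For $r,s\in\widetilde{\mathbb{R}}_{sm}$, $r\le s$ means there are representatives with $r_\varepsilon\le s_\varepsilon$ for all $\varepsilon\in I$. *)

theory Defs
  imports "HOL-Analysis.Analysis" "HOL-Library.Landau_Symbols" "HOL-Algebra.QuotRing"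
begin

text \<open>The index set I = (0,1]. Nets are functions real => real, extended by 0 outside I.\<close>
definition Iset :: "real set" where "Iset = {0<..1}"

text \<open>Smoothness (C-infinity) on a set S: a sequence of successive derivatives exists,
  derivatives taken within S (one-sided at the endpoint 1).\<close>
definition smooth_on_set :: "real set \<Rightarrow> (real \<Rightarrow> real) \<Rightarrow> bool" where
  "smooth_on_set S f \<longleftrightarrow> (\<exists>D :: nat \<Rightarrow> real \<Rightarrow> real. D 0 = f \<and>
      (\<forall>n. \<forall>x\<in>S. (D n has_real_derivative D (Suc n) x) (at x within S)))"

definition smooth_net :: "(real \<Rightarrow> real) \<Rightarrow> bool" where
  "smooth_net r \<longleftrightarrow> smooth_on_set Iset r \<and> (\<forall>e. e \<notin> Iset \<longrightarrow> r e = 0)"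

definition Emsm :: "(real \<Rightarrow> real) set" where
  "Emsm = {r. smooth_net r \<and> (\<exists>N::nat. r \<in> O[at_right 0](\<lambda>e. (1 / e) ^ N))}"

definition Nsm :: "(real \<Rightarrow> real) set" where
  "Nsm = {r. smooth_net r \<and> (\<forall>m::nat. r \<in> O[at_right 0](\<lambda>e. e ^ m))}"

definition Rsm :: "(real \<Rightarrow> real) ring" where
  "Rsm = \<lparr>carrier = Emsm,
          monoid.mult = (\<lambda>r s e. r e * s e),
          one = (\<lambda>e. if e \<in> Iset then 1 else 0),
          zero = (\<lambda>e. 0),
          add = (\<lambda>r s e. r e + s e)\<rparr>"

definition Rtsm :: "(real \<Rightarrow> real) set ring" where
  "Rtsm = Rsm Quot Nsm"

definition le_Rtsm :: "(real \<Rightarrow> real) set \<Rightarrow> (real \<Rightarrow> real) set \<Rightarrow> bool" where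
  "le_Rtsm x y \<longleftrightarrow> (\<exists>r\<in>x. \<exists>s\<in>y. \<forall>e\<in>Iset. r e \<le> s e)"

end

theory Submission imports Defs begin

text \<open>If 0 \<le> y \<le> x, pick representatives with 0 \<le> Y_e \<le> X_e for all e in I. The net
  z_e = Y_e / (X_e + exp (-1/e)) is smooth and bounded by 1, hence moderate, and
  Y_e - z_e X_e = exp (-1/e) z_e is negligible. So y = [z] x, which lies in every ideal containing x.\<close>

lemma smooth_on_setI_derivative_closed:
  assumes "f \<in> F"
    and "\<And>g. g \<in> F \<Longrightarrow> \<exists>g'\<in>F. \<forall>x\<in>S. (g has_real_derivative g' x) (at x within S)"
  shows "smooth_on_set S f"
proof -
  obtain d where d: "\<And>g. g \<in> F \<Longrightarrow> d g \<in> F \<and> (\<forall>x\<in>S. (g has_real_derivative d g x) (at x within S))"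
    using assms(2) by metis
  have "(d ^^ n) f \<in> F" for n
    by (induction n) (auto simp: assms(1) d)
  then show ?thesis
    unfolding smooth_on_set_def by (intro exI[of _ "\<lambda>n. (d ^^ n) f"]) (simp add: d)
qed

text \<open>The closure of the smooth functions under the operations below is closed under
  differentiation, so by the previous lemma it contains nothing but smooth functions.\<close>
inductive_set smooth_closure :: "real set \<Rightarrow> (real \<Rightarrow> real) set" for S where
  smooth: "smooth_on_set S f \<Longrightarrow> f \<in> smooth_closure S"
| const: "(\<lambda>x. c) \<in> smooth_closure S"
| ident: "(\<lambda>x. x) \<in> smooth_closure S"
| add: "f \<in> smooth_closure S \<Longrightarrow> g \<in> smooth_closure S \<Longrightarrow> (\<lambda>x. f x + g x) \<in> smooth_closure S"
| mult: "f \<in> smooth_closure S \<Longrightarrow> g \<in> smooth_closure S \<Longrightarrow> (\<lambda>x. f x * g x) \<in> smooth_closure S"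
| inverse: "f \<in> smooth_closure S \<Longrightarrow> (\<forall>x\<in>S. f x \<noteq> 0) \<Longrightarrow> (\<lambda>x. inverse (f x)) \<in> smooth_closure S"
| exp: "f \<in> smooth_closure S \<Longrightarrow> (\<lambda>x. exp (f x)) \<in> smooth_closure S"
| cong: "f \<in> smooth_closure S \<Longrightarrow> (\<forall>x\<in>S. f x = g x) \<Longrightarrow> g \<in> smooth_closure S"

lemma smooth_closure_has_derivative:
  "f \<in> smooth_closure S \<Longrightarrow> \<exists>f'\<in>smooth_closure S. \<forall>x\<in>S. (f has_real_derivative f' x) (at x within S)"
proof (induction rule: smooth_closure.induct)
  case (smooth f)
  then obtain D where D: "D 0 = f" "\<forall>n. \<forall>x\<in>S. (D n has_real_derivative D (Suc n) x) (at x within S)"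
    unfolding smooth_on_set_def by blast
  have "smooth_on_set S (D 1)"
    unfolding smooth_on_set_def by (rule exI[of _ "\<lambda>n. D (Suc n)"]) (use D in auto)
  then show ?case using D by (metis One_nat_def smooth_closure.smooth)
next
  case (const c)
  show ?case by (intro bexI[of _ "\<lambda>x. 0"] smooth_closure.const) auto
next
  case ident
  show ?case by (intro bexI[of _ "\<lambda>x. 1"] smooth_closure.const) (auto intro: DERIV_ident)
next
  case (add f g)
  then obtain f' g' where "f' \<in> smooth_closure S" "g' \<in> smooth_closure S"
    "\<forall>x\<in>S. (f has_real_derivative f' x) (at x within S)"
    "\<forall>x\<in>S. (g has_real_derivative g' x) (at x within S)" by blast
  then show ?case
    by (intro bexI[of _ "\<lambda>x. f' x + g' x"]) (auto intro: smooth_closure.add derivative_intros)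
next
  case (mult f g)
  then obtain f' g' where "f' \<in> smooth_closure S" "g' \<in> smooth_closure S"
    "\<forall>x\<in>S. (f has_real_derivative f' x) (at x within S)"
    "\<forall>x\<in>S. (g has_real_derivative g' x) (at x within S)" by blast
  then show ?case using mult.hyps
    by (intro bexI[of _ "\<lambda>x. f' x * g x + f x * g' x"])
       (auto intro!: smooth_closure.add smooth_closure.mult derivative_eq_intros)
next
  case (inverse f)
  then obtain f' where f': "f' \<in> smooth_closure S"
    "\<forall>x\<in>S. (f has_real_derivative f' x) (at x within S)" by blast
  let ?f'' = "\<lambda>x. (-1) * f' x * inverse (f x) * inverse (f x)"
  have "?f'' \<in> smooth_closure S"
    using f' inverse by (intro smooth_closure.mult smooth_closure.const smooth_closure.inverse)
  moreover have "\<forall>x\<in>S. ((\<lambda>x. inverse (f x)) has_real_derivative ?f'' x) (at x within S)"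
    using f' inverse by (auto intro!: derivative_eq_intros simp: field_simps power2_eq_square)
  ultimately show ?case by (intro bexI[of _ ?f''])
next
  case (exp f)
  then obtain f' where "f' \<in> smooth_closure S"
    "\<forall>x\<in>S. (f has_real_derivative f' x) (at x within S)" by blast
  then show ?case using exp.hyps
    by (intro bexI[of _ "\<lambda>x. exp (f x) * f' x"])
       (auto intro!: smooth_closure.mult smooth_closure.exp derivative_eq_intros)
next
  case (cong f g)
  then obtain f' where f': "f' \<in> smooth_closure S"
    "\<forall>x\<in>S. (f has_real_derivative f' x) (at x within S)" by blast
  have "(g has_real_derivative f' x) (at x within S)" if "x \<in> S" for x
    by (rule has_field_derivative_transform_within[of f _ x S 1]) (use f' that cong in auto)
  then show ?case using f' by blast
qed

lemma smooth_closure_smooth: "f \<in> smooth_closure S \<Longrightarrow> smooth_on_set S f"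
  by (erule smooth_on_setI_derivative_closed) (rule smooth_closure_has_derivative)

lemma smooth_on_set_const: "smooth_on_set S (\<lambda>x. c)"
  by (rule smooth_closure_smooth[OF smooth_closure.const])

lemma smooth_on_set_add:
  "smooth_on_set S f \<Longrightarrow> smooth_on_set S g \<Longrightarrow> smooth_on_set S (\<lambda>x. f x + g x)"
  by (rule smooth_closure_smooth[OF smooth_closure.add[OF smooth_closure.smooth smooth_closure.smooth]])

lemma smooth_on_set_mult:
  "smooth_on_set S f \<Longrightarrow> smooth_on_set S g \<Longrightarrow> smooth_on_set S (\<lambda>x. f x * g x)"
  by (rule smooth_closure_smooth[OF smooth_closure.mult[OF smooth_closure.smooth smooth_closure.smooth]])

lemma smooth_on_set_cong: "smooth_on_set S f \<Longrightarrow> (\<And>x. x \<in> S \<Longrightarrow> f x = g x) \<Longrightarrow> smooth_on_set S g"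
  by (rule smooth_closure_smooth[OF smooth_closure.cong[OF smooth_closure.smooth]]) auto

lemma smooth_on_set_minus: "smooth_on_set S f \<Longrightarrow> smooth_on_set S (\<lambda>x. - f x)"
  by (rule smooth_on_set_cong[OF smooth_on_set_mult[OF smooth_on_set_const[of S "-1"]]]) auto

lemma smooth_on_set_divide:
  assumes "smooth_on_set S f" "smooth_on_set S g" "\<And>x. x \<in> S \<Longrightarrow> g x \<noteq> 0"
  shows "smooth_on_set S (\<lambda>x. f x / g x)"
proof -
  have "(\<lambda>x. f x * inverse (g x)) \<in> smooth_closure S"
    using assms by (intro smooth_closure.mult[OF smooth_closure.smooth]
        smooth_closure.inverse[OF smooth_closure.smooth]) auto
  then show ?thesis
    by (rule smooth_closure_smooth[OF smooth_closure.cong]) (simp add: divide_inverse)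
qed

lemma smooth_on_set_exp_neg_inverse:
  assumes "0 \<notin> S" shows "smooth_on_set S (\<lambda>x. exp (-1 / x))"
proof -
  have "(\<lambda>x. -1 / x) \<in> smooth_closure S"
    using assms by (intro smooth_closure.cong[OF smooth_closure.mult[OF smooth_closure.const[of "-1"]
          smooth_closure.inverse[OF smooth_closure.ident]]]) (auto simp: divide_inverse)
  then show ?thesis by (rule smooth_closure_smooth[OF smooth_closure.exp])
qed

lemma smooth_net_add: "smooth_net a \<Longrightarrow> smooth_net b \<Longrightarrow> smooth_net (\<lambda>e. a e + b e)"
  by (simp add: smooth_net_def smooth_on_set_add)

lemma smooth_net_mult: "smooth_net a \<Longrightarrow> smooth_net b \<Longrightarrow> smooth_net (\<lambda>e. a e * b e)"
  by (simp add: smooth_net_def smooth_on_set_mult)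

lemma smooth_net_diff: "smooth_net a \<Longrightarrow> smooth_net b \<Longrightarrow> smooth_net (\<lambda>e. a e - b e)"
  using smooth_net_add[of a "\<lambda>e. - b e"] by (simp add: smooth_net_def smooth_on_set_minus)

lemma eventually_at_right_0_Iset: "\<forall>\<^sub>F e in at_right 0. e \<in> Iset"
  unfolding Iset_def eventually_at_right_field by (intro exI[of _ 1]) auto

lemma Nsm_zero: "(\<lambda>e. 0) \<in> Nsm"
  by (simp add: Nsm_def smooth_net_def smooth_on_set_const)

lemma Nsm_add: "a \<in> Nsm \<Longrightarrow> b \<in> Nsm \<Longrightarrow> (\<lambda>e. a e + b e) \<in> Nsm"
  by (simp add: Nsm_def smooth_net_add sum_in_bigo)

lemma Nsm_diff: "a \<in> Nsm \<Longrightarrow> b \<in> Nsm \<Longrightarrow> (\<lambda>e. a e - b e) \<in> Nsm"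
  by (simp add: Nsm_def smooth_net_diff sum_in_bigo)

lemma Nsm_subset_Emsm: "Nsm \<subseteq> Emsm"
proof
  fix r assume "r \<in> Nsm"
  then have "smooth_net r" "r \<in> O[at_right 0](\<lambda>e. (1/e) ^ 0)"
    by (auto simp: Nsm_def dest: spec[of _ 0])
  then show "r \<in> Emsm"
    unfolding Emsm_def by blast
qed

lemma Nsm_mult_Emsm:
  assumes "n \<in> Nsm" "a \<in> Emsm" shows "(\<lambda>e. n e * a e) \<in> Nsm"
proof -
  obtain N where N: "a \<in> O[at_right 0](\<lambda>e. (1/e) ^ N)"
    using assms(2) by (auto simp: Emsm_def)
  have "(\<lambda>e. n e * a e) \<in> O[at_right 0](\<lambda>e. e ^ m)" for m
  proof -
    have "(\<lambda>e. n e * a e) \<in> O[at_right 0](\<lambda>e. e ^ (m + N) * (1/e) ^ N)"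
      using assms(1) N by (intro landau_o.big.mult) (auto simp: Nsm_def)
    moreover have "(\<lambda>e. e ^ (m + N) * (1/e) ^ N) \<in> O[at_right 0](\<lambda>e. (e::real) ^ m)"
      by (intro bigoI[of _ 1] eventually_mono[OF eventually_at_right_less[of "0::real"]])
         (simp add: power_add power_one_over field_simps)
    ultimately show ?thesis
      by (rule landau_o.big_trans)
  qed
  then show ?thesis
    using assms by (auto simp: Nsm_def Emsm_def smooth_net_mult)
qed

lemma inverse_power_bigo_mono:
  assumes "N \<le> M" shows "(\<lambda>e. (1/e) ^ N) \<in> O[at_right (0::real)](\<lambda>e. (1/e) ^ M)"
proof (rule bigoI[of _ 1], rule eventually_mono[OF eventually_at_right_0_Iset])
  fix e :: real assume "e \<in> Iset"
  then have "0 < e" "1 \<le> 1/e" by (simp_all add: Iset_def)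
  moreover have "(1/e) ^ N \<le> (1/e) ^ M"
    using \<open>1 \<le> 1/e\<close> by (rule power_increasing[OF assms])
  ultimately show "norm ((1/e) ^ N) \<le> 1 * norm ((1/e) ^ M)"
    by (simp add: abs_of_nonneg)
qed

lemma Emsm_add:
  assumes "a \<in> Emsm" "b \<in> Emsm" shows "(\<lambda>e. a e + b e) \<in> Emsm"
proof -
  obtain N M where a: "a \<in> O[at_right 0](\<lambda>e. (1/e) ^ N)" and b: "b \<in> O[at_right 0](\<lambda>e. (1/e) ^ M)"
    using assms by (auto simp: Emsm_def)
  have "a \<in> O[at_right 0](\<lambda>e. (1/e) ^ (N + M))"
    using a inverse_power_bigo_mono[of N "N + M"] by (auto intro: landau_o.big_trans)
  moreover have "b \<in> O[at_right 0](\<lambda>e. (1/e) ^ (N + M))"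
    using b inverse_power_bigo_mono[of M "N + M"] by (auto intro: landau_o.big_trans)
  ultimately have "(\<lambda>e. a e + b e) \<in> O[at_right 0](\<lambda>e. (1/e) ^ (N + M))"
    by (rule sum_in_bigo)
  then show ?thesis
    using assms by (auto simp: Emsm_def smooth_net_add)
qed

lemma exp_neg_inverse_bigo_power: "(\<lambda>e. exp (-1/e)) \<in> O[at_right (0::real)](\<lambda>e. e ^ m)"
proof (rule landau_o.small_imp_big, rule smalloI_tendsto)
  have pos: "\<forall>\<^sub>F e in at_right 0. (0::real) < e"
    by (rule eventually_at_right_less)
  have "((\<lambda>e. inverse e ^ m / exp (inverse e)) \<longlongrightarrow> 0) (at_right (0::real))"
    by (rule filterlim_compose[OF tendsto_power_div_exp_0 filterlim_inverse_at_top_right])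
  then show "((\<lambda>e. exp (-1/e) / e ^ m) \<longlongrightarrow> 0) (at_right (0::real))"
    by (rule Lim_transform_eventually) (auto simp: exp_minus field_simps intro: eventually_mono[OF pos])
  show "\<forall>\<^sub>F e in at_right 0. (e::real) ^ m \<noteq> 0"
    using pos by (rule eventually_mono) simp
qed

text \<open>Dividing by X + exp (-1/e) rather than by X keeps the quotient smooth where X vanishes.\<close>
lemma dominated_net_factor:
  assumes X: "smooth_net X" and Y: "smooth_net Y"
    and dominated: "\<And>e. e \<in> Iset \<Longrightarrow> 0 \<le> Y e \<and> Y e \<le> X e"
  obtains z where "z \<in> Emsm" "(\<lambda>e. Y e - z e * X e) \<in> Nsm"
proof
  define z where "z e = (if e \<in> Iset then Y e / (X e + exp (-1/e)) else 0)" for e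
  have denom_pos: "0 < X e + exp (-1/e)" if "e \<in> Iset" for e
    using dominated[OF that] by (simp add: add_nonneg_pos)
  have z_unit: "0 \<le> z e \<and> z e \<le> 1" if "e \<in> Iset" for e
  proof -
    have "Y e \<le> X e + exp (-1/e)"
      using dominated[OF that] exp_gt_zero[of "-1/e"] by linarith
    then show ?thesis
      using dominated[OF that] denom_pos[OF that] that by (simp add: z_def)
  qed
  have "smooth_on_set Iset (\<lambda>e. X e + exp (-1/e))"
    using X smooth_on_set_exp_neg_inverse[of Iset]
    by (simp add: smooth_net_def Iset_def smooth_on_set_add)
  then have "smooth_on_set Iset (\<lambda>e. Y e / (X e + exp (-1/e)))"
    using Y by (intro smooth_on_set_divide) (auto simp: smooth_net_def dest!: denom_pos)
  then have z_smooth: "smooth_net z"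
    by (auto simp: smooth_net_def z_def intro: smooth_on_set_cong)
  have "z \<in> O[at_right 0](\<lambda>e. (1/e) ^ 0)"
    by (intro bigoI[of _ 1] eventually_mono[OF eventually_at_right_0_Iset]) (use z_unit in auto)
  with z_smooth show "z \<in> Emsm"
    unfolding Emsm_def by blast
  have "\<bar>Y e - z e * X e\<bar> \<le> exp (-1/e)" if "e \<in> Iset" for e
  proof -
    have "Y e - z e * X e = exp (-1/e) * z e"
      using denom_pos[OF that] that by (simp add: z_def field_simps)
    then show ?thesis
      using z_unit[OF that] by (simp add: abs_mult mult_left_le)
  qed
  then have "(\<lambda>e. Y e - z e * X e) \<in> O[at_right 0](\<lambda>e. exp (-1/e))"
    by (intro bigoI[of _ 1] eventually_mono[OF eventually_at_right_0_Iset]) auto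
  then have "(\<lambda>e. Y e - z e * X e) \<in> O[at_right 0](\<lambda>e. e ^ m)" for m
    using exp_neg_inverse_bigo_power by (rule landau_o.big_trans)
  with X Y z_smooth show "(\<lambda>e. Y e - z e * X e) \<in> Nsm"
    by (simp add: Nsm_def smooth_net_diff smooth_net_mult)
qed

definition Rtsm_class :: "(real \<Rightarrow> real) \<Rightarrow> (real \<Rightarrow> real) set" where
  "Rtsm_class a = {\<lambda>e. n e + a e | n. n \<in> Nsm}"

lemma carrier_Rtsm: "carrier Rtsm = Rtsm_class ` Emsm"
  by (auto simp: Rtsm_class_def Rtsm_def FactRing_def A_RCOSETS_def RCOSETS_def
      a_r_coset_def r_coset_def Rsm_def)

lemma zero_Rtsm: "\<zero>\<^bsub>Rtsm\<^esub> = Nsm"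
  by (simp add: Rtsm_def FactRing_def)

lemma mult_Rtsm: "A \<otimes>\<^bsub>Rtsm\<^esub> B = (\<Union>a\<in>A. \<Union>b\<in>B. Rtsm_class (\<lambda>e. a e * b e))"
  by (auto simp: Rtsm_class_def Rtsm_def FactRing_def rcoset_mult_def a_r_coset_def
      r_coset_def Rsm_def)

lemma Rtsm_class_iff: "u \<in> Rtsm_class a \<longleftrightarrow> (\<lambda>e. u e - a e) \<in> Nsm"
  unfolding Rtsm_class_def by (force intro: exI[of _ "\<lambda>e. u e - a e"])

lemma Rtsm_class_self: "a \<in> Rtsm_class a"
  using Nsm_zero by (simp add: Rtsm_class_iff)

lemma Rtsm_class_eqI:
  assumes "(\<lambda>e. b e - a e) \<in> Nsm" shows "Rtsm_class b = Rtsm_class a"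
proof -
  have "(\<lambda>e. u e - a e) \<in> Nsm \<longleftrightarrow> (\<lambda>e. u e - b e) \<in> Nsm" for u
    using Nsm_add[OF _ assms, of "\<lambda>e. u e - b e"] Nsm_diff[OF _ assms, of "\<lambda>e. u e - a e"]
    by auto
  then show ?thesis by (auto simp: Rtsm_class_iff)
qed

lemma Rtsm_class_subset_Emsm: "a \<in> Emsm \<Longrightarrow> Rtsm_class a \<subseteq> Emsm"
  using Emsm_add Nsm_subset_Emsm by (auto simp: Rtsm_class_def)

lemma carrier_Rtsm_memE:
  assumes "c \<in> carrier Rtsm" "u \<in> c" shows "u \<in> Emsm" "c = Rtsm_class u"
proof -
  obtain a where a: "a \<in> Emsm" "c = Rtsm_class a"
    using assms(1) by (auto simp: carrier_Rtsm)
  then show "u \<in> Emsm" using assms(2) Rtsm_class_subset_Emsm by blast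
  show "c = Rtsm_class u"
    using a assms(2) by (simp add: Rtsm_class_eqI Rtsm_class_iff)
qed

lemma mult_Rtsm_class:
  assumes "a \<in> Emsm" "b \<in> Emsm"
  shows "Rtsm_class a \<otimes>\<^bsub>Rtsm\<^esub> Rtsm_class b = Rtsm_class (\<lambda>e. a e * b e)"
proof -
  have "Rtsm_class (\<lambda>e. a' e * b' e) = Rtsm_class (\<lambda>e. a e * b e)"
    if "a' \<in> Rtsm_class a" "b' \<in> Rtsm_class b" for a' b'
  proof (rule Rtsm_class_eqI)
    have "b' \<in> Emsm" using that(2) Rtsm_class_subset_Emsm assms(2) by blast
    then have "(\<lambda>e. (a' e - a e) * b' e + (b' e - b e) * a e) \<in> Nsm"
      using that assms by (intro Nsm_add Nsm_mult_Emsm) (auto simp: Rtsm_class_iff)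
    then show "(\<lambda>e. a' e * b' e - a e * b e) \<in> Nsm"
      by (simp add: algebra_simps)
  qed
  then show ?thesis
    unfolding mult_Rtsm using Rtsm_class_self by blast
qed

text \<open>The two hypotheses provide different representatives of y; shifting by negligible nets
  makes them agree.\<close>
lemma le_Rtsm_nonneg_representatives:
  assumes x: "x \<in> carrier Rtsm" and y: "y \<in> carrier Rtsm"
    and "le_Rtsm \<zero>\<^bsub>Rtsm\<^esub> y" "le_Rtsm y x"
  obtains X Y where "X \<in> Emsm" "Y \<in> Emsm" "x = Rtsm_class X" "y = Rtsm_class Y"
    "\<And>e. e \<in> Iset \<Longrightarrow> 0 \<le> Y e \<and> Y e \<le> X e"
proof -
  obtain r s where r: "r \<in> Nsm" and s: "s \<in> y" and rs: "\<forall>e\<in>Iset. r e \<le> s e"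
    using assms(3) unfolding zero_Rtsm le_Rtsm_def by blast
  obtain s' t where s': "s' \<in> y" and t: "t \<in> x" and s't: "\<forall>e\<in>Iset. s' e \<le> t e"
    using assms(4) unfolding le_Rtsm_def by blast
  define Y where "Y e = s e - r e" for e
  define X where "X e = t e + (Y e - s' e)" for e
  have "(\<lambda>e. Y e - s e) \<in> Nsm"
    using Nsm_diff[OF Nsm_zero r] by (simp add: Y_def)
  then have y_eq: "y = Rtsm_class Y"
    using carrier_Rtsm_memE(2)[OF y s] by (simp add: Rtsm_class_eqI)
  have "(\<lambda>e. s e - s' e) \<in> Nsm"
    using s' carrier_Rtsm_memE(2)[OF y s] Nsm_diff[OF Nsm_zero] by (force simp: Rtsm_class_iff)
  then have "(\<lambda>e. (s e - s' e) - r e) \<in> Nsm"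
    by (rule Nsm_diff[OF _ r])
  moreover have "(\<lambda>e. X e - t e) = (\<lambda>e. (s e - s' e) - r e)"
    by (simp add: X_def Y_def algebra_simps)
  ultimately have "(\<lambda>e. X e - t e) \<in> Nsm"
    by simp
  then have x_eq: "x = Rtsm_class X"
    using carrier_Rtsm_memE(2)[OF x t] by (simp add: Rtsm_class_eqI)
  show ?thesis
  proof
    show "X \<in> Emsm" "Y \<in> Emsm"
      using Rtsm_class_self carrier_Rtsm_memE(1) x y x_eq y_eq by blast+
    show "0 \<le> Y e \<and> Y e \<le> X e" if "e \<in> Iset" for e
      using rs s't that by (simp add: X_def Y_def)
  qed (fact x_eq y_eq)+
qed

theorem proposition4p23:
  assumes "ideal J Rtsm"
    and "x \<in> J"
    and "y \<in> carrier Rtsm"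
    and "le_Rtsm \<zero>\<^bsub>Rtsm\<^esub> y"
    and "le_Rtsm y x"
  shows "y \<in> J"
proof -
  have x: "x \<in> carrier Rtsm"
    by (rule ideal.Icarr[OF assms(1,2)])
  obtain X Y where X: "X \<in> Emsm" "x = Rtsm_class X" and Y: "Y \<in> Emsm" "y = Rtsm_class Y"
    and dominated: "\<And>e. e \<in> Iset \<Longrightarrow> 0 \<le> Y e \<and> Y e \<le> X e"
    using le_Rtsm_nonneg_representatives[OF x assms(3-5)] by blast
  have "smooth_net X" "smooth_net Y"
    using X Y by (simp_all add: Emsm_def)
  then obtain z where z: "z \<in> Emsm" and Y_zX: "(\<lambda>e. Y e - z e * X e) \<in> Nsm"
    using dominated by (rule dominated_net_factor)
  have "y = Rtsm_class z \<otimes>\<^bsub>Rtsm\<^esub> x"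
    using Y_zX by (simp add: X Y mult_Rtsm_class z Rtsm_class_eqI)
  moreover have "Rtsm_class z \<in> carrier Rtsm"
    using z by (simp add: carrier_Rtsm)
  ultimately show ?thesis
    using ideal.I_l_closed[OF assms(1) assms(2)] by simp
qed

end
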